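(* Let $(X,P,o)$ be a generalized parametric metric space such that $P$ satisfies (P5) and $o$ is continuous. Then $(X,\tau_P)$ is regular: for every closed set $A\subseteq X$ and every $x\in X\setminus A$ there exist disjoint $U,V\in\tau_P$ with $x\in U$ and $A\subseteq V$.
   Context: A binary operation $o:[0,\infty)\times[0,\infty)\to[0,\infty)$ (written $\alpha\, o\, \beta$) is assumed to satisfy, for all $\alpha,\beta,\gamma\in[0,\infty)$: (a) $\alpha\, o\, 0=\alpha$; (b) $\alpha\le\beta\implies \alpha\, o\,\gamma\le\beta\, o\,\gamma$; (c) $\alpha\, o\,\gamma=\gamma\, o\,\alpha$; (d) $\alpha\, o\,(\beta\, o\,\gamma)=(\alpha\, o\,\beta)\, o\,\gamma$. It is continuous if whenever $\alpha_n\to\alpha$ and $\beta_n\to\beta$ in $[0,\infty)$ we have $\alpha_n\, o\,\beta_n\to\alpha\, o\,\beta$. A generalized parametric metric on a nonempty set $X$ is a function $P:X\times X\times(0,\infty)\to[0,\infty)$ such that: (P1) $P(a,b,t)=0$ for all $t>0$ if and only if $a=b$; (P2) $P(a,b,t)=P(b,a,t)$ for all $a,b\in X$, $t>0$; (P3) $P(a,b,s+t)\le P(a,x,s)\, o\, P(b,x,t)$ for all $s,t>0$ and $a,b,x\in X$. The triple $(X,P,o)$ is a generalized parametric metric space. Condition (P5): for all $a,b\in X$, the map $t\mapsto P(a,b,t)$ is continuous on $(0,\infty)$. Open ball: $B(a,\alpha,t)=\{b\in X: P(a,b,t)<\alpha\}$. $\tau_P$ is the topology consisting of all $A\subseteq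 X$ such that for every $a\in A$ there exist $\alpha>0,t>0$ with $B(a,\alpha,t)\subseteq A$. A sequence $\{x_n\}$ converges to $x$ if $\lim_{n\to\infty}P(x_n,x,t)=0$ for all $t>0$. A set $A\subseteq X$ is closed if whenever a sequence in $A$ converges to some $x\in X$, then $x\in A$. *)

theory Defs
  imports "HOL-Analysis.Analysis"
begin

definition gp_op :: "(real \<Rightarrow> real \<Rightarrow> real) \<Rightarrow> bool" where
  "gp_op opr \<longleftrightarrow>
     (\<forall>a\<ge>0. \<forall>b\<ge>0. opr a b \<ge> 0) \<and>
     (\<forall>a\<ge>0. opr a 0 = a) \<and>
     (\<forall>a b c. 0 \<le> a \<longrightarrow> a \<le> b \<longrightarrow> 0 \<le> c \<longrightarrow> opr a c \<le> opr b c) \<and>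
     (\<forall>a\<ge>0. \<forall>c\<ge>0. opr a c = opr c a) \<and>
     (\<forall>a\<ge>0. \<forall>b\<ge>0. \<forall>c\<ge>0. opr a (opr b c) = opr (opr a b) c)"

definition gp_op_continuous :: "(real \<Rightarrow> real \<Rightarrow> real) \<Rightarrow> bool" where
  "gp_op_continuous opr \<longleftrightarrow>
     (\<forall>(a::nat \<Rightarrow> real) b x y. (\<forall>n. a n \<ge> 0 \<and> b n \<ge> 0) \<longrightarrow> x \<ge> 0 \<longrightarrow> y \<ge> 0 \<longrightarrow>
        a \<longlonglongrightarrow> x \<longrightarrow> b \<longlonglongrightarrow> y \<longrightarrow> (\<lambda>n. opr (a n) (b n)) \<longlonglongrightarrow> opr x y)"

text \<open>Generalized parametric metric on X (only values at t > 0 matter).\<close>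
definition gen_param_metric ::
  "'a set \<Rightarrow> ('a \<Rightarrow> 'a \<Rightarrow> real \<Rightarrow> real) \<Rightarrow> (real \<Rightarrow> real \<Rightarrow> real) \<Rightarrow> bool" where
  "gen_param_metric X P opr \<longleftrightarrow>
     X \<noteq> {} \<and> gp_op opr \<and>
     (\<forall>a\<in>X. \<forall>b\<in>X. \<forall>t>0. P a b t \<ge> 0) \<and>
     (\<forall>a\<in>X. \<forall>b\<in>X. (\<forall>t>0. P a b t = 0) \<longleftrightarrow> a = b) \<and>
     (\<forall>a\<in>X. \<forall>b\<in>X. \<forall>t>0. P a b t = P b a t) \<and>
     (\<forall>a\<in>X. \<forall>b\<in>X. \<forall>x\<in>X. \<forall>s>0. \<forall>t>0. P a b (s + t) \<le> opr (P a x s) (P b x t))"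

definition gp_P5 :: "'a set \<Rightarrow> ('a \<Rightarrow> 'a \<Rightarrow> real \<Rightarrow> real) \<Rightarrow> bool" where
  "gp_P5 X P \<longleftrightarrow> (\<forall>a\<in>X. \<forall>b\<in>X. continuous_on {0<..} (P a b))"

definition gp_ball :: "'a set \<Rightarrow> ('a \<Rightarrow> 'a \<Rightarrow> real \<Rightarrow> real) \<Rightarrow> 'a \<Rightarrow> real \<Rightarrow> real \<Rightarrow> 'a set" where
  "gp_ball X P a \<alpha> t = {b\<in>X. P a b t < \<alpha>}"

definition gp_open :: "'a set \<Rightarrow> ('a \<Rightarrow> 'a \<Rightarrow> real \<Rightarrow> real) \<Rightarrow> 'a set \<Rightarrow> bool" where
  "gp_open X P A \<longleftrightarrow> A \<subseteq> X \<and>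
     (\<forall>a\<in>A. \<exists>\<alpha>>0. \<exists>t>0. gp_ball X P a \<alpha> t \<subseteq> A)"

definition gp_converges :: "'a set \<Rightarrow> ('a \<Rightarrow> 'a \<Rightarrow> real \<Rightarrow> real) \<Rightarrow> (nat \<Rightarrow> 'a) \<Rightarrow> 'a \<Rightarrow> bool" where
  "gp_converges X P s x \<longleftrightarrow> (\<forall>t>0. (\<lambda>n. P (s n) x t) \<longlonglongrightarrow> 0)"

definition gp_closed :: "'a set \<Rightarrow> ('a \<Rightarrow> 'a \<Rightarrow> real \<Rightarrow> real) \<Rightarrow> 'a set \<Rightarrow> bool" where
  "gp_closed X P A \<longleftrightarrow> A \<subseteq> X \<and>
     (\<forall>s x. (\<forall>n. s n \<in> A) \<longrightarrow> x \<in> X \<longrightarrow> gp_converges X P s x \<longrightarrow> x \<in> A)"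

end

theory Submission
  imports Defs
begin

text \<open>A point outside a closed set A has positive "parametric distance" from A: for some
  \<open>\<epsilon>, r > 0\<close> every \<open>a \<in> A\<close> satisfies \<open>\<epsilon> \<le> P x a r\<close>, since otherwise points of A with
  \<open>P x a (1/n) < 1/n\<close> would converge to x (P is antitone in t). Choosing \<open>\<delta> > 0\<close> with
  \<open>\<delta> o \<delta> < \<epsilon>\<close> by continuity of o, the balls of radius \<delta> at parameter r/2 around x and
  around the points of A are disjoint by (P3), and they are open by (P5) and continuity of o.\<close>

lemma gp_open_Union:
  assumes "\<And>U. U \<in> \<U> \<Longrightarrow> gp_open X P U"
  shows "gp_open X P (\<Union>\<U>)"
  using assms unfolding gp_open_def by (meson Sup_le_iff UnionE UnionI subset_iff)

lemma gp_op_continuous_perturb: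
  assumes "gp_op_continuous opr" "0 \<le> x" "0 \<le> y" "opr x y < \<alpha>"
  shows "\<exists>\<delta>>0. opr (x + \<delta>) (y + \<delta>) < \<alpha>"
proof -
  have inv: "(\<lambda>n. 1 / real (Suc n)) \<longlonglongrightarrow> 0"
    using LIMSEQ_Suc[OF lim_const_over_n[of 1]] by simp
  have "(\<lambda>n. x + 1 / real (Suc n)) \<longlonglongrightarrow> x" "(\<lambda>n. y + 1 / real (Suc n)) \<longlonglongrightarrow> y"
    using tendsto_add[OF tendsto_const inv] by simp_all
  then have "(\<lambda>n. opr (x + 1 / real (Suc n)) (y + 1 / real (Suc n))) \<longlonglongrightarrow> opr x y"
    using assms(1-3) unfolding gp_op_continuous_def by simp
  then have "eventually (\<lambda>n. opr (x + 1 / real (Suc n)) (y + 1 / real (Suc n)) < \<alpha>) sequentially"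
    using assms(4) by (rule order_tendstoD(2))
  then obtain N where "opr (x + 1 / real (Suc N)) (y + 1 / real (Suc N)) < \<alpha>"
    by (auto simp: eventually_sequentially)
  then show ?thesis
    by (intro exI[of _ "1 / real (Suc N)"]) simp
qed

locale gen_param_metric_space =
  fixes X :: "'a set" and P :: "'a \<Rightarrow> 'a \<Rightarrow> real \<Rightarrow> real" and opr :: "real \<Rightarrow> real \<Rightarrow> real"
  assumes gen_param_metric: "gen_param_metric X P opr"
begin

lemma gp_op: "gp_op opr"
  using gen_param_metric unfolding gen_param_metric_def by (elim conjE) blast

lemma op_right_zero: "0 \<le> a \<Longrightarrow> opr a 0 = a"
  using gp_op unfolding gp_op_def by (elim conjE) blast

lemma op_mono_left: "0 \<le> a \<Longrightarrow> a \<le> b \<Longrightarrow> 0 \<le> c \<Longrightarrow> opr a c \<le> opr b c"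
  using gp_op unfolding gp_op_def by (elim conjE) blast

lemma op_commute: "0 \<le> a \<Longrightarrow> 0 \<le> c \<Longrightarrow> opr a c = opr c a"
  using gp_op unfolding gp_op_def by (elim conjE) blast

lemma op_mono_right:
  assumes "0 \<le> a" "0 \<le> b" "b \<le> c"
  shows "opr a b \<le> opr a c"
  using op_mono_left[of b c a] op_commute assms by simp

lemma op_mono:
  assumes "0 \<le> a" "a \<le> b" "0 \<le> c" "c \<le> d"
  shows "opr a c \<le> opr b d"
  using op_mono_left[of a b c] op_mono_right[of b c d] assms by simp

lemma P_nonneg: "a \<in> X \<Longrightarrow> b \<in> X \<Longrightarrow> 0 < t \<Longrightarrow> 0 \<le> P a b t"
  using gen_param_metric unfolding gen_param_metric_def by (elim conjE) blast

lemma P_self: "a \<in> X \<Longrightarrow> 0 < t \<Longrightarrow> P a a t = 0"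
  using gen_param_metric unfolding gen_param_metric_def by (elim conjE) blast

lemma P_commute: "a \<in> X \<Longrightarrow> b \<in> X \<Longrightarrow> 0 < t \<Longrightarrow> P a b t = P b a t"
  using gen_param_metric unfolding gen_param_metric_def by (elim conjE) metis

lemma P_triangle:
  "a \<in> X \<Longrightarrow> b \<in> X \<Longrightarrow> x \<in> X \<Longrightarrow> 0 < s \<Longrightarrow> 0 < t \<Longrightarrow> P a b (s + t) \<le> opr (P a x s) (P b x t)"
  using gen_param_metric unfolding gen_param_metric_def by (elim conjE) metis

lemma P_antimono:
  assumes "a \<in> X" "b \<in> X" "0 < s" "s \<le> t"
  shows "P a b t \<le> P a b s"
proof (cases "s = t")
  case False
  then have "0 < t - s" using assms by simp
  then have "P a b (s + (t - s)) \<le> opr (P a b s) (P b b (t - s))"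
    using P_triangle assms by blast
  also have "\<dots> = P a b s"
    using P_self[of b "t - s"] op_right_zero P_nonneg assms \<open>0 < t - s\<close> by simp
  finally show ?thesis by simp
qed simp

lemma center_in_gp_ball: "a \<in> X \<Longrightarrow> 0 < t \<Longrightarrow> 0 < \<alpha> \<Longrightarrow> a \<in> gp_ball X P a \<alpha> t"
  unfolding gp_ball_def using P_self by simp

lemma gp_balls_disjoint:
  assumes "x \<in> X" "a \<in> X" "0 < r" "0 < \<delta>" "opr \<delta> \<delta> < P x a r"
  shows "gp_ball X P x \<delta> (r/2) \<inter> gp_ball X P a \<delta> (r/2) = {}"
proof (rule ccontr)
  assume "gp_ball X P x \<delta> (r/2) \<inter> gp_ball X P a \<delta> (r/2) \<noteq> {}"
  then obtain y where y: "y \<in> X" "P x y (r/2) < \<delta>" "P a y (r/2) < \<delta>"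
    unfolding gp_ball_def by auto
  have "P x a (r/2 + r/2) \<le> opr (P x y (r/2)) (P a y (r/2))"
    using P_triangle[of x a y "r/2" "r/2"] assms y by simp
  also have "\<dots> \<le> opr \<delta> \<delta>"
    using op_mono P_nonneg assms y by (simp add: less_imp_le)
  finally show False using assms(5) by simp
qed

lemma gp_converges_shrinking:
  assumes s: "\<And>n. s n \<in> X" "\<And>n. P x (s n) (1 / real (Suc n)) < 1 / real (Suc n)"
    and xX: "x \<in> X"
  shows "gp_converges X P s x"
  unfolding gp_converges_def
proof (intro allI impI)
  fix t :: real assume "0 < t"
  obtain N where N: "1 / real (Suc N) < t"
    using reals_Archimedean[OF \<open>0 < t\<close>] by (auto simp: inverse_eq_divide)
  have "P (s n) x t \<le> 1 / real (Suc n)" if "N \<le> n" for n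
  proof -
    have "1 / real (Suc n) \<le> 1 / real (Suc N)"
      using that by (simp add: frac_le)
    then have "P x (s n) t \<le> P x (s n) (1 / real (Suc n))"
      using P_antimono[of x "s n" "1 / real (Suc n)" t] N xX s(1) by auto
    moreover have "P (s n) x t = P x (s n) t"
      using P_commute[of "s n" x t] xX s(1) \<open>0 < t\<close> by auto
    ultimately show ?thesis
      using s(2)[of n] by simp
  qed
  then have upper: "eventually (\<lambda>n. P (s n) x t \<le> 1 / real (Suc n)) sequentially"
    by (auto simp: eventually_sequentially)
  have lower: "eventually (\<lambda>n. 0 \<le> P (s n) x t) sequentially"
    using P_nonneg s(1) xX \<open>0 < t\<close> by (intro always_eventually) blast
  have "(\<lambda>n. 1 / real (Suc n)) \<longlonglongrightarrow> 0"
    using LIMSEQ_Suc[OF lim_const_over_n[of 1]] by simp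
  then show "(\<lambda>n. P (s n) x t) \<longlonglongrightarrow> 0"
    using tendsto_sandwich[OF lower upper tendsto_const] by simp
qed

lemma closed_set_apart:
  assumes closed: "gp_closed X P A" and x: "x \<in> X - A"
  shows "\<exists>\<epsilon>>0. \<exists>r>0. \<forall>a\<in>A. \<epsilon> \<le> P x a r"
proof (rule ccontr)
  assume no_gap: "\<not> ?thesis"
  have "\<exists>a\<in>A. P x a (1 / real (Suc n)) < 1 / real (Suc n)" for n
  proof -
    have "0 < 1 / real (Suc n)" by simp
    then show ?thesis using no_gap by (auto simp: not_le)
  qed
  then obtain s where s: "\<And>n. s n \<in> A" "\<And>n. P x (s n) (1 / real (Suc n)) < 1 / real (Suc n)"
    by metis
  have "A \<subseteq> X" using closed unfolding gp_closed_def by simp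
  then have "gp_converges X P s x"
    using s x by (intro gp_converges_shrinking) auto
  then have "x \<in> A"
    using closed s(1) x unfolding gp_closed_def by blast
  with x show False by simp
qed

end

locale continuous_gen_param_metric_space = gen_param_metric_space +
  assumes P5: "gp_P5 X P"
    and op_continuous: "gp_op_continuous opr"
begin

lemma gp_ball_open:
  assumes a: "a \<in> X" and t: "0 < t"
  shows "gp_open X P (gp_ball X P a \<alpha> t)"
  unfolding gp_open_def
proof (intro conjI ballI)
  show "gp_ball X P a \<alpha> t \<subseteq> X" unfolding gp_ball_def by auto
next
  fix b assume "b \<in> gp_ball X P a \<alpha> t"
  then have b: "b \<in> X" and lt: "P a b t < \<alpha>" unfolding gp_ball_def by auto
  text \<open>By (P5), shrinking the parameter slightly keeps b strictly inside the ball.\<close>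
  have "isCont (P a b) t"
    using P5 a b t unfolding gp_P5_def by (simp add: continuous_on_eq_continuous_at)
  moreover have "0 < \<alpha> - P a b t" using lt by simp
  ultimately obtain d where d: "0 < d"
    and dd: "\<And>y. dist y t < d \<Longrightarrow> dist (P a b y) (P a b t) < \<alpha> - P a b t"
    unfolding continuous_at_eps_delta by blast
  define s where "s = min (d/2) (t/2)"
  have s: "0 < s" "s < t" "s < d" using d t unfolding s_def by auto
  have g: "P a b (t - s) < \<alpha>"
    using dd[of "t - s"] s by (simp add: dist_real_def abs_less_iff)
  have g0: "0 \<le> P a b (t - s)" using P_nonneg a b s by simp
  obtain \<beta> where \<beta>: "0 < \<beta>" "opr (P a b (t - s) + \<beta>) (0 + \<beta>) < \<alpha>"
    using gp_op_continuous_perturb[OF op_continuous g0 order_refl] g op_right_zero[OF g0] by auto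
  have "gp_ball X P b \<beta> s \<subseteq> gp_ball X P a \<alpha> t"
  proof
    fix c assume "c \<in> gp_ball X P b \<beta> s"
    then have c: "c \<in> X" and pc: "P b c s < \<beta>" unfolding gp_ball_def by auto
    have "P a c ((t - s) + s) \<le> opr (P a b (t - s)) (P c b s)"
      using P_triangle[of a c b "t - s" s] a b c s by simp
    also have "\<dots> \<le> opr (P a b (t - s) + \<beta>) \<beta>"
      using op_mono g0 P_nonneg P_commute b c s pc by (simp add: less_imp_le \<open>0 < \<beta>\<close>)
    finally show "c \<in> gp_ball X P a \<alpha> t" using \<beta> c unfolding gp_ball_def by simp
  qed
  then show "\<exists>\<alpha>'>0. \<exists>t'>0. gp_ball X P b \<alpha>' t' \<subseteq> gp_ball X P a \<alpha> t"
    using \<beta>(1) s(1) by blast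
qed

end

theorem mainTheorem10:
  fixes X :: "'a set" and P :: "'a \<Rightarrow> 'a \<Rightarrow> real \<Rightarrow> real" and opr :: "real \<Rightarrow> real \<Rightarrow> real"
  assumes "gen_param_metric X P opr"
    and "gp_P5 X P"
    and "gp_op_continuous opr"
    and "gp_closed X P A"
    and "x \<in> X - A"
  shows "\<exists>U V. gp_open X P U \<and> gp_open X P V \<and> U \<inter> V = {} \<and> x \<in> U \<and> A \<subseteq> V"
proof -
  interpret continuous_gen_param_metric_space X P opr
    using assms(1-3) by unfold_locales
  have AX: "A \<subseteq> X" and xX: "x \<in> X" using assms(4,5) unfolding gp_closed_def by auto
  obtain \<epsilon> r where "0 < \<epsilon>" "0 < r" and apart: "\<And>a. a \<in> A \<Longrightarrow> \<epsilon> \<le> P x a r"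
    using closed_set_apart[OF assms(4,5)] by blast
  obtain \<delta> where "0 < \<delta>" "opr \<delta> \<delta> < \<epsilon>"
    using gp_op_continuous_perturb[OF assms(3), of 0 0 \<epsilon>] op_right_zero \<open>0 < \<epsilon>\<close> by auto
  define U where "U = gp_ball X P x \<delta> (r/2)"
  define V where "V = (\<Union>a\<in>A. gp_ball X P a \<delta> (r/2))"
  have "gp_open X P U"
    unfolding U_def using gp_ball_open xX \<open>0 < r\<close> by simp
  moreover have "gp_open X P V"
    unfolding V_def using gp_ball_open AX \<open>0 < r\<close> by (intro gp_open_Union) auto
  moreover have "U \<inter> V = {}"
    unfolding U_def V_def using gp_balls_disjoint xX AX \<open>0 < r\<close> \<open>0 < \<delta>\<close> \<open>opr \<delta> \<delta> < \<epsilon>\<close> apart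
    by (fastforce simp: subset_iff)
  moreover have "x \<in> U"
    unfolding U_def using center_in_gp_ball xX \<open>0 < r\<close> \<open>0 < \<delta>\<close> by simp
  moreover have "A \<subseteq> V"
  proof
    fix a assume "a \<in> A"
    then have "a \<in> gp_ball X P a \<delta> (r/2)"
      using center_in_gp_ball AX \<open>0 < r\<close> \<open>0 < \<delta>\<close> by auto
    with \<open>a \<in> A\<close> show "a \<in> V" unfolding V_def by blast
  qed
  ultimately show ?thesis by blast
qed

end
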